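(* Let $\mathbb O$ be a finite set of consecutive integers containing $0$, and let $\theta=0$. Let $x(0)\in\mathbb O^n$. If neither $\mathcal V_{<0}(x(0))=\{i: x_i(0)<0\}$ nor $\mathcal V_{>0}(x(0))=\{i: x_i(0)>0\}$ contains a non-empty strictly cohesive set, then there exists a finite legal update sequence from $x(0)$ along which the system reaches the consensus state $(0,\dots,0)$.
   Context: Let $n\ge1$, $\mathcal V=\{1,\dots,n\}$, and let $W=(w_{ij})$ be an $n\times n$ row-stochastic matrix (nonnegative entries, each row summing to $1$). For $x\in\mathbb O^n$, $i\in\mathcal V$, $z\in\mathbb O$, define $C^i_{\mathrm{social}}(z;x)=\sum_{j=1}^n w_{ij}|z-x_j|$ and $P_i(x)=\{z\in\mathbb O: C^i_{\mathrm{social}}(z;x)\le C^i_{\mathrm{social}}(x_i;x),\ |z-\theta|\le |x_i-\theta|\}$. A legal update sequence from $x(0)$ is a finite sequence $(i_1,z_1),\dots,(i_T,z_T)$ with $i_t\in\mathcal V$, generating $x(1),\dots,x(T)$ where $x(t)$ is obtained from $x(t-1)$ by setting coordinate $i_t$ to $z_t$, such that $z_t\in P_{i_t}(x(t-1))$ for every $t$. A set $\mathcal M\subseteq\mathcal V$ is strictly cohesive if $\sum_{j\in\mathcal M}w_{ij}>\tfrac12$ for every $i\in\mathcal M$. *)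

theory Defs
  imports Complex_Main
begin

text \<open>Agents are indexed by V = {1..n}; states are functions nat => int,
  only coordinates in {1..n} are meaningful. The opinion set O is a set of integers.\<close>

definition row_stochastic :: "nat \<Rightarrow> (nat \<Rightarrow> nat \<Rightarrow> real) \<Rightarrow> bool" where
  "row_stochastic n W \<longleftrightarrow>
     (\<forall>i\<in>{1..n}. (\<forall>j\<in>{1..n}. W i j \<ge> 0) \<and> (\<Sum>j=1..n. W i j) = 1)"

definition C_social :: "nat \<Rightarrow> (nat \<Rightarrow> nat \<Rightarrow> real) \<Rightarrow> nat \<Rightarrow> int \<Rightarrow> (nat \<Rightarrow> int) \<Rightarrow> real" where
  "C_social n W i z x = (\<Sum>j=1..n. W i j * \<bar>real_of_int (z - x j)\<bar>)"

definition P_set :: "int set \<Rightarrow> int \<Rightarrow> nat \<Rightarrow> (nat \<Rightarrow> nat \<Rightarrow> real) \<Rightarrow> nat \<Rightarrow> (nat \<Rightarrow> int) \<Rightarrow> int set" where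
  "P_set O\<^sub>s \<theta> n W i x =
     {z \<in> O\<^sub>s. C_social n W i z x \<le> C_social n W i (x i) x \<and> \<bar>z - \<theta>\<bar> \<le> \<bar>x i - \<theta>\<bar>}"

fun legal_seq :: "int set \<Rightarrow> int \<Rightarrow> nat \<Rightarrow> (nat \<Rightarrow> nat \<Rightarrow> real) \<Rightarrow> (nat \<Rightarrow> int) \<Rightarrow> (nat \<times> int) list \<Rightarrow> bool" where
  "legal_seq O\<^sub>s \<theta> n W x [] = True"
| "legal_seq O\<^sub>s \<theta> n W x ((i, z) # us) =
     (i \<in> {1..n} \<and> z \<in> P_set O\<^sub>s \<theta> n W i x \<and> legal_seq O\<^sub>s \<theta> n W (x(i := z)) us)"

fun run_seq :: "(nat \<Rightarrow> int) \<Rightarrow> (nat \<times> int) list \<Rightarrow> (nat \<Rightarrow> int)" where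
  "run_seq x [] = x"
| "run_seq x ((i, z) # us) = run_seq (x(i := z)) us"

definition strictly_cohesive :: "nat \<Rightarrow> (nat \<Rightarrow> nat \<Rightarrow> real) \<Rightarrow> nat set \<Rightarrow> bool" where
  "strictly_cohesive n W M \<longleftrightarrow> M \<subseteq> {1..n} \<and> (\<forall>i\<in>M. (\<Sum>j\<in>M. W i j) > 1/2)"

end

theory Submission
  imports Defs
begin

text \<open>An agent i with x i \<noteq> \<theta> whose neighbours on its own side of \<theta> carry total weight at
  most 1/2 may jump to \<theta>: this brings it closer by |x i - \<theta>| to every agent not strictly on
  its side and moves it away by at most that amount from the others, so its social cost does
  not increase. If some agent is off \<theta>, the nonempty side it lies on is not strictly
  cohesive and hence contains such an agent. Moving it to \<theta> only shrinks both sides, so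
  the hypothesis is preserved and induction on the number of agents off \<theta> ends in
  consensus at \<theta>.\<close>

definition same_side :: "nat \<Rightarrow> int \<Rightarrow> (nat \<Rightarrow> int) \<Rightarrow> nat \<Rightarrow> nat set" where
  "same_side n \<theta> x i = {j \<in> {1..n}. 0 < (x j - \<theta>) * (x i - \<theta>)}"

definition has_cohesive_subset :: "nat \<Rightarrow> (nat \<Rightarrow> nat \<Rightarrow> real) \<Rightarrow> nat set \<Rightarrow> bool" where
  "has_cohesive_subset n W S \<longleftrightarrow> (\<exists>M. M \<noteq> {} \<and> M \<subseteq> S \<and> strictly_cohesive n W M)"

lemma has_cohesive_subset_mono:
  "S \<subseteq> T \<Longrightarrow> has_cohesive_subset n W S \<Longrightarrow> has_cohesive_subset n W T"
  unfolding has_cohesive_subset_def by blast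

lemma abs_le_abs_diff_add_signed:
  fixes u v :: "'a::linordered_idom"
  shows "\<bar>v\<bar> \<le> \<bar>u - v\<bar> + \<bar>u\<bar> * (if 0 < u * v then 1 else -1)"
proof (cases "0 < u * v")
  case False
  then have "(u \<le> 0 \<and> 0 \<le> v) \<or> (0 \<le> u \<and> v \<le> 0)"
    by (auto simp: zero_less_mult_iff)
  with False show ?thesis by auto
qed auto

lemma sum_signed_weights:
  assumes rs: "row_stochastic n W" and i: "i \<in> {1..n}" and A: "A \<subseteq> {1..n}"
  shows "(\<Sum>j=1..n. W i j * (if j \<in> A then 1 else -1)) = 2 * (\<Sum>j\<in>A. W i j) - 1"
proof -
  have total: "(\<Sum>j=1..n. W i j) = 1"
    using rs i unfolding row_stochastic_def by blast
  have "(\<Sum>j=1..n. W i j * (if j \<in> A then 1 else -1))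
      = (\<Sum>j=1..n. 2 * (if j \<in> A then W i j else 0) - W i j)"
    by (rule sum.cong) auto
  also have "\<dots> = 2 * (\<Sum>j\<in>A. W i j) - 1"
    using A total by (simp add: sum_subtractf sum_distrib_left[symmetric] sum.If_cases
        Int_absorb1)
  finally show ?thesis .
qed

lemma C_social_theta_le:
  assumes rs: "row_stochastic n W" and i: "i \<in> {1..n}"
  shows "C_social n W i \<theta> x \<le> C_social n W i (x i) x
    + \<bar>real_of_int (x i - \<theta>)\<bar> * (2 * (\<Sum>j\<in>same_side n \<theta> x i. W i j) - 1)"
proof -
  let ?d = "\<bar>real_of_int (x i - \<theta>)\<bar>"
  let ?s = "\<lambda>j. if j \<in> same_side n \<theta> x i then 1 else -1 :: real"
  have "W i j * \<bar>real_of_int (\<theta> - x j)\<bar>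
      \<le> W i j * \<bar>real_of_int (x i - x j)\<bar> + ?d * (W i j * ?s j)"
    if j: "j \<in> {1..n}" for j
  proof -
    have "\<bar>real_of_int (\<theta> - x j)\<bar> \<le> \<bar>real_of_int (x i - x j)\<bar> + ?d * ?s j"
      using abs_le_abs_diff_add_signed
          [where u = "real_of_int (x i - \<theta>)" and v = "real_of_int (x j - \<theta>)"] j
      unfolding of_int_mult[symmetric] of_int_0_less_iff of_int_diff[symmetric]
      by (simp add: same_side_def abs_minus_commute mult.commute)
    moreover have "0 \<le> W i j"
      using rs i j unfolding row_stochastic_def by blast
    ultimately show ?thesis
      by (metis mult_left_mono distrib_left mult.left_commute)
  qed
  then have "C_social n W i \<theta> x
      \<le> (\<Sum>j=1..n. W i j * \<bar>real_of_int (x i - x j)\<bar> + ?d * (W i j * ?s j))"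
    unfolding C_social_def by (rule sum_mono)
  also have "\<dots> = C_social n W i (x i) x + ?d * (\<Sum>j=1..n. W i j * ?s j)"
    unfolding C_social_def by (simp add: sum.distrib sum_distrib_left)
  also have "(\<Sum>j=1..n. W i j * ?s j) = 2 * (\<Sum>j\<in>same_side n \<theta> x i. W i j) - 1"
    by (rule sum_signed_weights[OF rs i]) (auto simp: same_side_def)
  finally show ?thesis .
qed

lemma theta_in_P_set:
  assumes "\<theta> \<in> O\<^sub>s" and rs: "row_stochastic n W" and i: "i \<in> {1..n}"
    and light: "(\<Sum>j\<in>same_side n \<theta> x i. W i j) \<le> 1/2"
  shows "\<theta> \<in> P_set O\<^sub>s \<theta> n W i x"
proof -
  have "\<bar>real_of_int (x i - \<theta>)\<bar> * (2 * (\<Sum>j\<in>same_side n \<theta> x i. W i j) - 1) \<le> 0"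
    using light by (simp add: mult_nonneg_nonpos)
  with C_social_theta_le[OF rs i, of \<theta> x] assms(1) show ?thesis
    unfolding P_set_def by auto
qed

lemma exists_light_agent:
  assumes "\<not> has_cohesive_subset n W {j \<in> {1..n}. x j < \<theta>}"
    and "\<not> has_cohesive_subset n W {j \<in> {1..n}. x j > \<theta>}"
    and off: "i0 \<in> {1..n}" "x i0 \<noteq> \<theta>"
  obtains i where "i \<in> {1..n}" "x i \<noteq> \<theta>" "(\<Sum>j\<in>same_side n \<theta> x i. W i j) \<le> 1/2"
proof -
  define sides where "sides = {{j \<in> {1..n}. x j < \<theta>}, {j \<in> {1..n}. x j > \<theta>}}"
  have "i0 \<in> {j \<in> {1..n}. x j < \<theta>} \<or> i0 \<in> {j \<in> {1..n}. x j > \<theta>}"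
    using off by auto
  then obtain S where S: "S \<in> sides" "i0 \<in> S"
    unfolding sides_def by blast
  have "\<not> strictly_cohesive n W S"
  proof
    assume "strictly_cohesive n W S"
    with S(2) have "has_cohesive_subset n W S"
      unfolding has_cohesive_subset_def by blast
    with assms(1,2) S(1) show False
      unfolding sides_def by blast
  qed
  moreover have "S \<subseteq> {1..n}" using S(1) unfolding sides_def by blast
  ultimately obtain i where i: "i \<in> S" "(\<Sum>j\<in>S. W i j) \<le> 1/2"
    unfolding strictly_cohesive_def by (auto simp: not_less)
  moreover have "same_side n \<theta> x i = S"
    using S(1) i(1) unfolding sides_def by (auto simp: same_side_def zero_less_mult_iff)
  moreover have "i \<in> {1..n}" "x i \<noteq> \<theta>" using S(1) i(1) unfolding sides_def by auto
  ultimately show ?thesis using that by simp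
qed

lemma consensus_reachable:
  assumes "\<theta> \<in> O\<^sub>s" and rs: "row_stochastic n W"
    and "\<not> has_cohesive_subset n W {j \<in> {1..n}. x j < \<theta>}"
    and "\<not> has_cohesive_subset n W {j \<in> {1..n}. x j > \<theta>}"
  shows "\<exists>us. legal_seq O\<^sub>s \<theta> n W x us \<and> (\<forall>j\<in>{1..n}. run_seq x us j = \<theta>)"
  using assms(3,4)
proof (induction "card {j \<in> {1..n}. x j \<noteq> \<theta>}" arbitrary: x rule: less_induct)
  case less
  show ?case
  proof (cases "\<forall>j\<in>{1..n}. x j = \<theta>")
    case True
    then show ?thesis by (intro exI[of _ "[]"]) simp
  next
    case False
    then obtain i where i: "i \<in> {1..n}" "x i \<noteq> \<theta>"
      and light: "(\<Sum>j\<in>same_side n \<theta> x i. W i j) \<le> 1/2"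
      using exists_light_agent[OF less.prems] by blast
    define x' where "x' = x(i := \<theta>)"
    have "{j \<in> {1..n}. x' j \<noteq> \<theta>} = {j \<in> {1..n}. x j \<noteq> \<theta>} - {i}"
      unfolding x'_def by auto
    also have "card \<dots> < card {j \<in> {1..n}. x j \<noteq> \<theta>}"
      by (rule card_Diff1_less) (use i in auto)
    finally have fewer: "card {j \<in> {1..n}. x' j \<noteq> \<theta>} < card {j \<in> {1..n}. x j \<noteq> \<theta>}" .
    have "{j \<in> {1..n}. x' j < \<theta>} \<subseteq> {j \<in> {1..n}. x j < \<theta>}"
      "{j \<in> {1..n}. x' j > \<theta>} \<subseteq> {j \<in> {1..n}. x j > \<theta>}"
      unfolding x'_def by auto
    then have "\<not> has_cohesive_subset n W {j \<in> {1..n}. x' j < \<theta>}"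
      "\<not> has_cohesive_subset n W {j \<in> {1..n}. x' j > \<theta>}"
      using less.prems has_cohesive_subset_mono by blast+
    with less.hyps[OF fewer] obtain us
      where "legal_seq O\<^sub>s \<theta> n W x' us" "\<forall>j\<in>{1..n}. run_seq x' us j = \<theta>"
      by blast
    with theta_in_P_set[OF assms(1) rs i(1) light] i(1) show ?thesis
      unfolding x'_def by (intro exI[of _ "(i, \<theta>) # us"]) simp
  qed
qed

theorem theorem5:
  fixes n :: nat and W :: "nat \<Rightarrow> nat \<Rightarrow> real" and a b :: int and x0 :: "nat \<Rightarrow> int"
  assumes "n \<ge> 1"
    and "row_stochastic n W"
    and "a \<le> 0" and "0 \<le> b"
    and "\<forall>j\<in>{1..n}. x0 j \<in> {a..b}"
    and "\<not> (\<exists>M. M \<noteq> {} \<and> M \<subseteq> {i \<in> {1..n}. x0 i < 0} \<and> strictly_cohesive n W M)"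
    and "\<not> (\<exists>M. M \<noteq> {} \<and> M \<subseteq> {i \<in> {1..n}. x0 i > 0} \<and> strictly_cohesive n W M)"
  shows "\<exists>us. legal_seq {a..b} 0 n W x0 us \<and> (\<forall>j\<in>{1..n}. run_seq x0 us j = 0)"
proof -
  have "(0::int) \<in> {a..b}" using assms(3,4) by simp
  then show ?thesis
    using consensus_reachable[OF _ assms(2)] assms(6,7)
    unfolding has_cohesive_subset_def by blast
qed

end
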